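(* In the three-point self-training loop with $\Gamma=\infty$, fix a period $t$ with symmetric prior $\pi_t(-\bar\theta)=\pi_t(\bar\theta)=(1-p_t)/2$, $\pi_t(0)=p_t\in[0,1)$, and suppose the users use signals $\sigma_t(0)=\infty$ and $\sigma_t(-\bar\theta)=\sigma_t(\bar\theta)=\sigma\in(0,\infty)$ (held fixed). Then the next-period mass at zero $p_{t+1}=\pi_{t+1}(0)=\mathbb P(\theta^\star_t=0)$ is (1) strictly increasing in $p_t$, and (2) strictly increasing in $\sigma$. Equivalently, since $\mathrm{Var}(\theta^\star_t)=\bar\theta^2(1-p_{t+1})$ and $\mathrm{Var}$ of the prior $\pi_t$ is $\bar\theta^2(1-p_t)$, the output variance at period $t$ is strictly increasing in the variance of the period-$t$ prior and strictly decreasing in $\sigma$.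
   Context: Three-point self-training loop. Fix $\bar\theta>0$, $p_0\in(0,1)$, $\gamma>0$, $\Gamma\in(0,\infty]$. Population preferences $\theta$ take values in $\Theta=\{-\bar\theta,0,\bar\theta\}$ with $\pi_T(-\bar\theta)=\pi_T(\bar\theta)=(1-p_0)/2$, $\pi_T(0)=p_0$. Set $\pi_0=\pi_T$. At period $t$ the AI prior $\pi_t$ is a distribution on $\Theta$. A user of type $\theta$ uses a signal level $\sigma\in[0,\infty]$; the AI observes $s=\theta+\varepsilon$, $\varepsilon\sim N(0,\sigma^2)$, forms the Bayesian posterior $\pi_t(\cdot\mid s)$ (Gaussian likelihood; the prior itself if $\sigma=\infty$), and outputs $\theta_{A,t}(s,\sigma)\in\arg\min_{\hat\theta\in\Theta}\sum_{\vartheta\in\Theta}(\hat\theta-\vartheta)^2\pi_t(\vartheta\mid s)$. With $\Gamma=\infty$ every user uses the AI, so the output is $\theta^\star_t=\theta_{A,t}(s,\sigma_t(\theta))$ with $s\sim N(\theta,\sigma_t(\theta)^2)$, and the next prior is $\pi_{t+1}(\vartheta)=\mathbb P(\theta^\star_t=\vartheta)$ with $\theta\sim\pi_T$. *)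

theory Defs
  imports "HOL-Probability.Probability"
begin

definition Theta :: "real \<Rightarrow> real set" where
  "Theta tb = {- tb, 0, tb}"

definition sym_prior :: "real \<Rightarrow> real \<Rightarrow> real \<Rightarrow> real" where
  "sym_prior tb p x = (if x = 0 then p else if x = tb \<or> x = - tb then (1 - p) / 2 else 0)"

text \<open>For sigma = infinity the signal is uninformative (its value is
  irrelevant, we put it at theta); for sigma = 0 the signal equals theta.\<close>
definition signal_dist :: "real \<Rightarrow> ereal \<Rightarrow> real measure" where
  "signal_dist th sg =
     (if sg = \<infinity> \<or> sg = 0 then return borel th
      else density lborel (\<lambda>s. ennreal (normal_density th (real_of_ereal sg) s)))"

definition posterior :: "real \<Rightarrow> (real \<Rightarrow> real) \<Rightarrow> ereal \<Rightarrow> real \<Rightarrow> real \<Rightarrow> real" where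
  "posterior tb pr sg s v =
     (if sg = \<infinity> then pr v
      else if sg = 0 then (if s \<in> Theta tb then (if v = s then 1 else 0) else pr v)
      else pr v * normal_density v (real_of_ereal sg) s
             / (\<Sum>w\<in>Theta tb. pr w * normal_density w (real_of_ereal sg) s))"

definition exp_loss :: "real \<Rightarrow> (real \<Rightarrow> real) \<Rightarrow> ereal \<Rightarrow> real \<Rightarrow> real \<Rightarrow> real" where
  "exp_loss tb pr sg s h = (\<Sum>v\<in>Theta tb. (h - v)\<^sup>2 * posterior tb pr sg s v)"

text \<open>AI output: a minimiser of the expected loss over Theta tb (ties, which occur only on a
  null set of signals, are broken in favour of 0, then tb, then -tb).\<close>
definition ai_output :: "real \<Rightarrow> (real \<Rightarrow> real) \<Rightarrow> ereal \<Rightarrow> real \<Rightarrow> real" where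
  "ai_output tb pr sg s =
     (let L = exp_loss tb pr sg s in
      if L 0 \<le> L tb \<and> L 0 \<le> L (- tb) then 0
      else if L tb \<le> L (- tb) then tb else - tb)"

lemma ai_output_in_argmin:
  assumes "tb > 0"
  shows "ai_output tb pr sg s \<in> Theta tb \<and>
         (\<forall>h\<in>Theta tb. exp_loss tb pr sg s (ai_output tb pr sg s) \<le> exp_loss tb pr sg s h)"
  unfolding ai_output_def Let_def Theta_def by auto

text \<open>Next-period prior mass at a point x (Gamma = infinity): P(theta* = x), theta ~ pi_T,
  where pi_T is the symmetric population distribution with mass p0 at 0, the AI prior is pr,
  and sgf gives the signal level of each type.\<close>
definition next_mass :: "real \<Rightarrow> real \<Rightarrow> (real \<Rightarrow> real) \<Rightarrow> (real \<Rightarrow> ereal) \<Rightarrow> real \<Rightarrow> real" where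
  "next_mass tb p0 pr sgf x =
     (\<Sum>th\<in>Theta tb. sym_prior tb p0 th *
        measure (signal_dist th (sgf th)) {s \<in> space (signal_dist th (sgf th)).
                                           ai_output tb pr (sgf th) s = x})"

definition sig_policy :: "real \<Rightarrow> real \<Rightarrow> ereal" where
  "sig_policy sg th = (if th = 0 then \<infinity> else ereal sg)"

definition p_next :: "real \<Rightarrow> real \<Rightarrow> real \<Rightarrow> real \<Rightarrow> real" where
  "p_next tb p0 pt sg = next_mass tb p0 (sym_prior tb pt) (sig_policy sg) 0"

end

theory Submission
  imports Defs
begin

text \<open>The uninformative type 0 is always answered 0. A type \<open>\<plusminus>\<theta>\<close> with Gaussian signal \<open>s\<close> is
  answered 0 exactly when \<open>|s| \<theta> / \<sigma>\<^sup>2 \<le> g\<close>: comparing posterior losses gives a quadratic inequality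
  in \<open>exp (s \<theta> / \<sigma>\<^sup>2)\<close>, and \<open>g\<close> is the logarithm of its positive root. In terms of the prior
  odds \<open>b = p / (1 - p)\<close> and \<open>u = \<theta> / \<sigma>\<close> this gives
  \<open>p' = p\<^sub>0 + (1 - p\<^sub>0) (\<Phi> (g/u - u) - \<Phi> (- g/u - u))\<close> with \<open>g = g (b, u)\<close>.
  The cutoff increases with \<open>b\<close>, which gives monotonicity in \<open>p\<close>. For \<open>\<sigma>\<close> one differentiates
  in \<open>u\<close>: the normal density at the lower endpoint is the one at the upper endpoint divided by
  \<open>exp (2 g)\<close>, and an identity satisfied by the root of the quadratic makes the derivative
  negative.\<close>

text \<open>An antiderivative of the standard normal density; only its differences occur.\<close>
definition Phi :: "real \<Rightarrow> real" where
  "Phi = (SOME F. \<forall>x. (F has_real_derivative std_normal_density x) (at x))"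

lemma Phi_deriv: "(Phi has_real_derivative std_normal_density x) (at x)"
proof -
  have "\<exists>F. \<forall>x::real. -\<infinity> < x \<longrightarrow> x < \<infinity> \<longrightarrow>
      (F has_vector_derivative std_normal_density x) (at x)"
    by (rule einterval_antiderivative) (auto simp: normal_density_def intro!: continuous_intros)
  then have "\<exists>F. \<forall>x. (F has_real_derivative std_normal_density x) (at x)"
    by (auto simp: has_real_derivative_iff_has_vector_derivative)
  from someI_ex[OF this] show ?thesis
    unfolding Phi_def by blast
qed

lemma Phi_strict_mono: "strict_mono Phi"
proof (rule strict_monoI)
  show "Phi a < Phi b" if "a < b" for a b
    by (rule DERIV_pos_imp_increasing[OF that]) (auto intro!: Phi_deriv simp: normal_density_pos)
qed

lemma Phi_diff_reflect: "Phi b - Phi a = Phi (- a) - Phi (- b)"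
proof -
  have "((\<lambda>x. Phi x + Phi (- x)) has_real_derivative 0) (at x)" for x
  proof -
    have "((\<lambda>x. Phi x + Phi (- x)) has_real_derivative
        std_normal_density x + std_normal_density (- x) * (- 1)) (at x)"
      by (intro DERIV_add Phi_deriv DERIV_chain2[OF Phi_deriv] derivative_eq_intros) auto
    then show ?thesis
      by (simp add: normal_density_def)
  qed
  then have "Phi b + Phi (- b) = Phi a + Phi (- a)"
    by (intro DERIV_isconst_all allI)
  then show ?thesis
    by simp
qed

lemma measure_normal_interval:
  assumes \<sigma>: "\<sigma> > 0" and "lo \<le> hi"
  shows "measure (density lborel (\<lambda>s. ennreal (normal_density \<mu> \<sigma> s))) {lo..hi}
       = Phi ((hi - \<mu>) / \<sigma>) - Phi ((lo - \<mu>) / \<sigma>)"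
proof -
  define F where "F s = Phi ((s - \<mu>) / \<sigma>)" for s
  have "(F has_real_derivative normal_density \<mu> \<sigma> x) (at x)" for x
  proof -
    have "(F has_real_derivative std_normal_density ((x - \<mu>) / \<sigma>) * (1 / \<sigma>)) (at x)"
      unfolding F_def[abs_def]
      by (rule DERIV_chain2[OF Phi_deriv]) (use \<sigma> in \<open>auto intro!: derivative_eq_intros\<close>)
    moreover have "std_normal_density ((x - \<mu>) / \<sigma>) * (1 / \<sigma>) = normal_density \<mu> \<sigma> x"
      using \<sigma> by (simp add: normal_density_def real_sqrt_mult power_divide)
    ultimately show ?thesis
      by simp
  qed
  then have int: "(normal_density \<mu> \<sigma> has_integral F hi - F lo) {lo..hi}"
    using \<open>lo \<le> hi\<close>
    by (intro fundamental_theorem_of_calculus)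
       (auto simp: has_real_derivative_iff_has_vector_derivative[symmetric]
             intro: has_field_derivative_at_within)
  have "emeasure (density lborel (\<lambda>s. ennreal (normal_density \<mu> \<sigma> s))) {lo..hi}
      = (\<integral>\<^sup>+x. ennreal (normal_density \<mu> \<sigma> x) * indicator {lo..hi} x \<partial>lborel)"
    by (subst emeasure_density) auto
  also have "\<dots> = (\<integral>\<^sup>+x. ennreal (indicator {lo..hi} x * normal_density \<mu> \<sigma> x) \<partial>lborel)"
    by (rule nn_integral_cong) (auto simp: indicator_def)
  also have "\<dots> = ennreal (F hi - F lo)"
    by (rule nn_integral_has_integral_lebesgue[OF _ int]) simp
  finally show ?thesis
    using has_integral_nonneg[OF int] by (simp add: measure_def F_def)
qed

lemma normal_density_factor:
  assumes "\<sigma> > 0"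
  shows "normal_density \<mu> \<sigma> s
       = normal_density 0 \<sigma> s * exp (- \<mu>\<^sup>2 / (2 * \<sigma>\<^sup>2)) * exp (s * \<mu> / \<sigma>\<^sup>2)"
proof -
  have "- (s - \<mu>)\<^sup>2 / (2 * \<sigma>\<^sup>2) = - (s - 0)\<^sup>2 / (2 * \<sigma>\<^sup>2) + - \<mu>\<^sup>2 / (2 * \<sigma>\<^sup>2) + s * \<mu> / \<sigma>\<^sup>2"
    using assms by (simp add: field_simps power2_eq_square)
  then have "exp (- (s - \<mu>)\<^sup>2 / (2 * \<sigma>\<^sup>2))
      = exp (- (s - 0)\<^sup>2 / (2 * \<sigma>\<^sup>2)) * exp (- \<mu>\<^sup>2 / (2 * \<sigma>\<^sup>2)) * exp (s * \<mu> / \<sigma>\<^sup>2)"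
    by (simp only: exp_add)
  then show ?thesis
    unfolding normal_density_def by simp
qed

lemma std_normal_density_reflect_shift:
  "std_normal_density (- a - u) = std_normal_density (a - u) * exp (- 2 * a * u)"
proof -
  have "- (- a - u - 0)\<^sup>2 / (2 * 1\<^sup>2) = - (a - u - 0)\<^sup>2 / (2 * 1\<^sup>2) + - 2 * a * u"
    by (simp add: power2_eq_square field_simps)
  then have "exp (- (- a - u - 0)\<^sup>2 / (2 * 1\<^sup>2)) = exp (- (a - u - 0)\<^sup>2 / (2 * 1\<^sup>2)) * exp (- 2 * a * u)"
    by (simp only: exp_add)
  then show ?thesis
    unfolding normal_density_def by simp
qed

lemma square_le_iff_le_root:
  fixes E r :: real
  assumes "E > 0"
  shows "E\<^sup>2 \<le> 2 * r * E + 3 \<longleftrightarrow> E \<le> r + sqrt (r\<^sup>2 + 3)"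
proof -
  define R where "R = sqrt (r\<^sup>2 + 3)"
  have "R\<^sup>2 = r\<^sup>2 + 3"
    unfolding R_def by simp
  then have "E\<^sup>2 - 2 * r * E - 3 = (E - (r + R)) * (E - (r - R))"
    by (simp add: algebra_simps power2_eq_square)
  moreover have "r < R"
    unfolding R_def by (smt (verit) real_sqrt_abs real_sqrt_less_mono)
  ultimately show ?thesis
    using assms unfolding R_def[symmetric] by (smt (verit) mult_le_0_iff)
qed

lemma root_gt_one:
  assumes "r \<ge> 0"
  shows "r + sqrt (r\<^sup>2 + 3) > 1"
proof -
  have "1 < sqrt (r\<^sup>2 + 3)"
    by (rule real_less_rsqrt) (simp add: add_pos_nonneg)
  with assms show ?thesis
    by linarith
qed

lemma root_strict_mono:
  assumes "0 \<le> r1" "r1 < r2"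
  shows "r1 + sqrt (r1\<^sup>2 + 3) < r2 + sqrt (r2\<^sup>2 + 3)"
proof -
  have "r1\<^sup>2 + 3 < r2\<^sup>2 + 3"
    using assms by (simp add: power_strict_mono)
  then have "sqrt (r1\<^sup>2 + 3) < sqrt (r2\<^sup>2 + 3)"
    by (simp only: real_sqrt_less_iff)
  with assms show ?thesis
    by linarith
qed

lemma root_identity:
  fixes r R :: real
  assumes "R\<^sup>2 = r\<^sup>2 + 3"
  shows "r * ((r + R)\<^sup>2 + 1) - R * ((r + R)\<^sup>2 - 1) = - 2 * (r + R)"
  using assms unfolding power2_eq_square by algebra

lemma sum_Theta: "tb \<noteq> 0 \<Longrightarrow> (\<Sum>v\<in>Theta tb. f v) = f (- tb) + f 0 + f tb"
  unfolding Theta_def by (simp add: algebra_simps)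

lemma sym_prior_simps:
  assumes "tb \<noteq> 0"
  shows "sym_prior tb p 0 = p" "sym_prior tb p tb = (1 - p) / 2" "sym_prior tb p (- tb) = (1 - p) / 2"
  using assms unfolding sym_prior_def by auto

lemma exp_loss_zero_le_iff:
  assumes "tb \<noteq> 0" "h = tb \<or> h = - tb" "\<sigma> > 0"
    and Z: "0 < (\<Sum>w\<in>Theta tb. pr w * normal_density w \<sigma> s)"
  defines "lik v \<equiv> pr v * normal_density v \<sigma> s"
  shows "exp_loss tb pr (ereal \<sigma>) s 0 \<le> exp_loss tb pr (ereal \<sigma>) s h
     \<longleftrightarrow> lik h \<le> 3 * lik (- h) + lik 0"
proof -
  have h: "h \<noteq> 0" "Theta tb = Theta h"
    using assms(1,2) unfolding Theta_def by auto
  have loss: "exp_loss tb pr (ereal \<sigma>) s k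
      = ((k + h)\<^sup>2 * lik (- h) + k\<^sup>2 * lik 0 + (k - h)\<^sup>2 * lik h)
        / (\<Sum>w\<in>Theta tb. pr w * normal_density w \<sigma> s)" for k
    using \<open>\<sigma> > 0\<close> unfolding exp_loss_def posterior_def lik_def h(2) sum_Theta[OF h(1)]
    by (simp add: add_divide_distrib)
  have "exp_loss tb pr (ereal \<sigma>) s 0 \<le> exp_loss tb pr (ereal \<sigma>) s h
      \<longleftrightarrow> 0 \<le> h\<^sup>2 * (3 * lik (- h) + lik 0 - lik h)"
    unfolding loss divide_le_cancel using Z by (simp add: algebra_simps power2_eq_square)
  also have "\<dots> \<longleftrightarrow> lik h \<le> 3 * lik (- h) + lik 0"
    using h(1) by (simp add: zero_le_mult_iff)
  finally show ?thesis .
qed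

text \<open>Parameters: \<open>b = p / (1 - p)\<close> is the prior odds and \<open>u = \<theta> / \<sigma>\<close> the signal-to-noise
  ratio; \<open>scaled_odds\<close> is the coefficient \<open>r\<close> of the quadratic \<open>E\<^sup>2 = 2 r E + 3\<close> whose positive
  root defines the cutoff.\<close>
definition scaled_odds :: "real \<Rightarrow> real \<Rightarrow> real" where
  "scaled_odds b u = b * exp (u\<^sup>2 / 2)"

definition cutoff :: "real \<Rightarrow> real \<Rightarrow> real" where
  "cutoff b u = ln (scaled_odds b u + sqrt ((scaled_odds b u)\<^sup>2 + 3))"

lemma scaled_odds_nonneg: "b \<ge> 0 \<Longrightarrow> scaled_odds b u \<ge> 0"
  unfolding scaled_odds_def by simp

lemma cutoff_pos: "b \<ge> 0 \<Longrightarrow> cutoff b u > 0"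
  unfolding cutoff_def using root_gt_one[OF scaled_odds_nonneg] by (simp add: ln_gt_zero)

lemma ai_output_uninformative:
  assumes "tb \<noteq> 0"
  shows "ai_output tb (sym_prior tb p) \<infinity> s = 0"
proof -
  have loss: "exp_loss tb (sym_prior tb p) \<infinity> s h
      = (h + tb)\<^sup>2 * ((1 - p) / 2) + h\<^sup>2 * p + (h - tb)\<^sup>2 * ((1 - p) / 2)" for h
    unfolding exp_loss_def posterior_def using assms by (simp add: sum_Theta sym_prior_simps)
  have "exp_loss tb (sym_prior tb p) \<infinity> s h = exp_loss tb (sym_prior tb p) \<infinity> s 0 + tb\<^sup>2"
    if "h = tb \<or> h = - tb" for h
    using that unfolding loss by (auto simp: power2_eq_square field_simps)
  then show ?thesis
    unfolding ai_output_def Let_def by simp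
qed

lemma ai_output_zero_iff:
  assumes tb: "tb > 0" and \<sigma>: "\<sigma> > 0" and p: "0 \<le> p" "p < 1"
  shows "ai_output tb (sym_prior tb p) (ereal \<sigma>) s = 0
     \<longleftrightarrow> \<bar>s\<bar> * tb / \<sigma>\<^sup>2 \<le> cutoff (p / (1 - p)) (tb / \<sigma>)"
proof -
  define lik where "lik v = sym_prior tb p v * normal_density v \<sigma> s" for v
  define C where "C = (1 - p) / 2 * normal_density 0 \<sigma> s * exp (- tb\<^sup>2 / (2 * \<sigma>\<^sup>2))"
  define r where "r = scaled_odds (p / (1 - p)) (tb / \<sigma>)"
  define E where "E = exp (s * tb / \<sigma>\<^sup>2)"
  have C: "C > 0"
    using p \<sigma> by (simp add: C_def normal_density_pos)
  have lik: "lik tb = C * E" "lik (- tb) = C / E" "lik 0 = 2 * r * C"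
    using tb p \<sigma>
    by (simp_all add: lik_def C_def E_def r_def scaled_odds_def sym_prior_simps exp_minus
        normal_density_factor[of \<sigma> tb] normal_density_factor[of \<sigma> "- tb"] power_divide
        exp_add[symmetric] field_simps)
  have Z: "0 < (\<Sum>w\<in>Theta tb. sym_prior tb p w * normal_density w \<sigma> s)"
    using tb p \<sigma> by (simp add: sum_Theta sym_prior_simps normal_density_pos add_nonneg_pos)
  have below_root: "lik h \<le> 3 * lik (- h) + lik 0 \<longleftrightarrow> x \<le> ln (r + sqrt (r\<^sup>2 + 3))"
    if "lik h = C * exp x" "lik (- h) = C / exp x" for h x
  proof -
    have "lik h \<le> 3 * lik (- h) + lik 0 \<longleftrightarrow> lik h * exp x \<le> (3 * lik (- h) + lik 0) * exp x"
      by simp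
    also have "\<dots> \<longleftrightarrow> C * (exp x)\<^sup>2 \<le> C * (2 * r * exp x + 3)"
      unfolding that lik(3) by (simp add: algebra_simps power2_eq_square)
    also have "\<dots> \<longleftrightarrow> (exp x)\<^sup>2 \<le> 2 * r * exp x + 3"
      using C by simp
    also have "\<dots> \<longleftrightarrow> x \<le> ln (r + sqrt (r\<^sup>2 + 3))"
      using root_gt_one[of r] r_def p
      by (simp add: square_le_iff_le_root ln_ge_iff scaled_odds_nonneg)
    finally show ?thesis .
  qed
  have "ai_output tb (sym_prior tb p) (ereal \<sigma>) s = 0
      \<longleftrightarrow> lik tb \<le> 3 * lik (- tb) + lik 0 \<and> lik (- tb) \<le> 3 * lik (- (- tb)) + lik 0"
    unfolding ai_output_def Let_def lik_def
    using tb \<sigma> Z exp_loss_zero_le_iff[of tb tb] exp_loss_zero_le_iff[of tb "- tb"] by auto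
  also have "\<dots> \<longleftrightarrow> s * tb / \<sigma>\<^sup>2 \<le> cutoff (p / (1 - p)) (tb / \<sigma>)
                  \<and> - (s * tb / \<sigma>\<^sup>2) \<le> cutoff (p / (1 - p)) (tb / \<sigma>)"
    using below_root[of tb "s * tb / \<sigma>\<^sup>2"] below_root[of "- tb" "- (s * tb / \<sigma>\<^sup>2)"] lik
    unfolding cutoff_def r_def[symmetric] E_def by (simp add: exp_minus divide_inverse)
  also have "\<dots> \<longleftrightarrow> \<bar>s * tb / \<sigma>\<^sup>2\<bar> \<le> cutoff (p / (1 - p)) (tb / \<sigma>)"
    by (simp only: abs_le_iff)
  also have "\<bar>s * tb / \<sigma>\<^sup>2\<bar> = \<bar>s\<bar> * tb / \<sigma>\<^sup>2"
    using tb by (simp add: abs_mult)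
  finally show ?thesis
    by simp
qed

definition zero_output_prob :: "real \<Rightarrow> real \<Rightarrow> real" where
  "zero_output_prob b u = Phi (cutoff b u / u - u) - Phi (- cutoff b u / u - u)"

lemma measure_zero_output:
  assumes tb: "tb > 0" and \<sigma>: "\<sigma> > 0" and p: "0 \<le> p" "p < 1" and th: "th = tb \<or> th = - tb"
  shows "measure (signal_dist th (ereal \<sigma>))
           {s \<in> space (signal_dist th (ereal \<sigma>)). ai_output tb (sym_prior tb p) (ereal \<sigma>) s = 0}
       = zero_output_prob (p / (1 - p)) (tb / \<sigma>)"
proof -
  define g where "g = cutoff (p / (1 - p)) (tb / \<sigma>)"
  define S where "S = \<sigma>\<^sup>2 * g / tb"
  have dist: "signal_dist th (ereal \<sigma>) = density lborel (\<lambda>s. ennreal (normal_density th \<sigma> s))"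
    using \<sigma> by (simp add: signal_dist_def)
  have scale: "\<bar>s\<bar> * tb / \<sigma>\<^sup>2 \<le> g \<longleftrightarrow> \<bar>s\<bar> \<le> S" for s
    using tb \<sigma> by (simp add: S_def field_simps)
  have zero_iff: "ai_output tb (sym_prior tb p) (ereal \<sigma>) s = 0 \<longleftrightarrow> s \<in> {- S..S}" for s
    unfolding ai_output_zero_iff[OF tb \<sigma> p] g_def[symmetric] scale by auto
  have set: "{s \<in> space (signal_dist th (ereal \<sigma>)). ai_output tb (sym_prior tb p) (ereal \<sigma>) s = 0}
      = {- S..S}"
    unfolding dist zero_iff by auto
  have "g > 0"
    using cutoff_pos[of "p / (1 - p)"] p by (simp add: g_def)
  then have "- S \<le> S"
    using tb by (simp add: S_def)
  have U: "(S - tb) / \<sigma> = g / (tb / \<sigma>) - tb / \<sigma>"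
    and L: "(- S - tb) / \<sigma> = - g / (tb / \<sigma>) - tb / \<sigma>"
    using tb \<sigma> by (simp_all add: S_def field_simps power2_eq_square)
  have "measure (signal_dist th (ereal \<sigma>))
          {s \<in> space (signal_dist th (ereal \<sigma>)). ai_output tb (sym_prior tb p) (ereal \<sigma>) s = 0}
      = Phi ((S - th) / \<sigma>) - Phi ((- S - th) / \<sigma>)"
    unfolding set unfolding dist by (rule measure_normal_interval[OF \<sigma> \<open>- S \<le> S\<close>])
  also have "\<dots> = Phi ((S - tb) / \<sigma>) - Phi ((- S - tb) / \<sigma>)"
  proof -
    have "- ((- S + tb) / \<sigma>) = (S - tb) / \<sigma>" "- ((S + tb) / \<sigma>) = (- S - tb) / \<sigma>"
      by (simp_all add: minus_divide_left)
    then show ?thesis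
      using th Phi_diff_reflect[of "(S + tb) / \<sigma>" "(- S + tb) / \<sigma>"] by auto
  qed
  finally show ?thesis
    unfolding zero_output_prob_def g_def[symmetric] U L .
qed

lemma p_next_eq:
  assumes "tb > 0" "\<sigma> > 0" "0 \<le> p" "p < 1"
  shows "p_next tb p0 p \<sigma> = p0 + (1 - p0) * zero_output_prob (p / (1 - p)) (tb / \<sigma>)"
proof -
  have "measure (signal_dist 0 \<infinity>) {s \<in> space (signal_dist 0 \<infinity>). ai_output tb (sym_prior tb p) \<infinity> s = 0} = 1"
    using ai_output_uninformative[of tb p] assms(1) by (simp add: signal_dist_def measure_return)
  with assms show ?thesis
    using measure_zero_output[of tb \<sigma> p tb] measure_zero_output[of tb \<sigma> p "- tb"]
    unfolding p_next_def next_mass_def sig_policy_def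
    by (simp add: sum_Theta sym_prior_simps algebra_simps)
qed

lemma cutoff_strict_mono_left:
  assumes "0 \<le> b1" "b1 < b2"
  shows "cutoff b1 u < cutoff b2 u"
proof -
  have "scaled_odds b1 u < scaled_odds b2 u"
    using assms by (simp add: scaled_odds_def)
  then show ?thesis
    unfolding cutoff_def using assms scaled_odds_nonneg[of b1 u]
    by (simp add: root_strict_mono root_gt_one less_trans[OF zero_less_one])
qed

lemma zero_output_prob_strict_mono_left:
  assumes "0 \<le> b1" "b1 < b2" "u > 0"
  shows "zero_output_prob b1 u < zero_output_prob b2 u"
proof -
  have "cutoff b1 u / u < cutoff b2 u / u"
    using cutoff_strict_mono_left[OF assms(1,2)] assms(3) by (simp add: divide_strict_right_mono)
  then have "Phi (cutoff b1 u / u - u) < Phi (cutoff b2 u / u - u)"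
    and "Phi (- cutoff b2 u / u - u) < Phi (- cutoff b1 u / u - u)"
    by (auto intro!: strict_monoD[OF Phi_strict_mono])
  then show ?thesis
    unfolding zero_output_prob_def by simp
qed

lemma scaled_odds_deriv: "(scaled_odds b has_real_derivative scaled_odds b u * u) (at u)"
  unfolding scaled_odds_def by (auto intro!: derivative_eq_intros)

lemma sqrt_odds_deriv:
  "((\<lambda>u. sqrt ((scaled_odds b u)\<^sup>2 + 3)) has_real_derivative
      scaled_odds b u * (scaled_odds b u * u) / sqrt ((scaled_odds b u)\<^sup>2 + 3)) (at u)"
proof -
  have "((\<lambda>u. sqrt ((scaled_odds b u)\<^sup>2 + 3)) has_real_derivative
      inverse (sqrt ((scaled_odds b u)\<^sup>2 + 3)) / 2 * (2 * scaled_odds b u * (scaled_odds b u * u))) (at u)"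
    by (auto intro!: derivative_eq_intros scaled_odds_deriv simp: add_nonneg_pos)
      (smt (verit) zero_le_power2)+
  then show ?thesis
    by (simp add: field_simps)
qed

lemma cutoff_deriv:
  assumes "b \<ge> 0"
  shows "(cutoff b has_real_derivative
      scaled_odds b u * u / sqrt ((scaled_odds b u)\<^sup>2 + 3)) (at u)"
proof -
  define r where "r = scaled_odds b u"
  define R where "R = sqrt (r\<^sup>2 + 3)"
  have R: "R > 0"
    unfolding R_def by (simp add: add_nonneg_pos)
  have X: "r + R > 0"
    using root_gt_one[OF scaled_odds_nonneg[OF assms, of u]] unfolding R_def r_def by linarith
  have "(cutoff b has_real_derivative inverse (r + R) * (r * u + r * (r * u) / R)) (at u)"
    unfolding cutoff_def[abs_def]
    using DERIV_chain2[OF DERIV_ln DERIV_add[OF scaled_odds_deriv sqrt_odds_deriv]] X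
    unfolding r_def R_def by simp
  moreover have "inverse (r + R) * (r * u + r * (r * u) / R) = r * u / R"
  proof -
    have "r * u + r * (r * u) / R = r * u / R * (r + R)"
      using R by (simp add: field_simps)
    then show ?thesis
      using X by simp
  qed
  ultimately show ?thesis
    unfolding r_def R_def by (rule DERIV_cong)
qed

lemma cutoff_over_deriv:
  assumes "b \<ge> 0" "u > 0"
  defines "r \<equiv> scaled_odds b u"
  shows "((\<lambda>v. cutoff b v / v) has_real_derivative
      (r * u / sqrt (r\<^sup>2 + 3) * u - cutoff b u) / u\<^sup>2) (at u)"
  using DERIV_quotient[OF cutoff_deriv[OF assms(1)] DERIV_ident, of u] assms(2)
  unfolding r_def by (simp add: power2_eq_square)

lemma zero_output_prob_neg_deriv:
  assumes b: "b \<ge> 0" and u: "u > 0"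
  shows "\<exists>d. (zero_output_prob b has_real_derivative d) (at u) \<and> d < 0"
proof -
  define r where "r = scaled_odds b u"
  define R where "R = sqrt (r\<^sup>2 + 3)"
  define g where "g = cutoff b u"
  define D where "D = (r * u / R * u - g) / u\<^sup>2"
  define X where "X = r + R"
  define U where "U = g / u - u"
  have R: "R > 0" and RR: "R\<^sup>2 = r\<^sup>2 + 3"
    unfolding R_def by (simp_all add: add_nonneg_pos)
  have X: "X > 1"
    unfolding X_def R_def r_def using root_gt_one[OF scaled_odds_nonneg[OF b]] .
  have g: "g > 0" and gX: "exp g = X"
    using cutoff_pos[OF b] X unfolding g_def cutoff_def X_def R_def r_def by simp_all
  have dQ: "((\<lambda>v. cutoff b v / v) has_real_derivative D) (at u)"
    using cutoff_over_deriv[OF b u] unfolding D_def R_def r_def g_def .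
  have dU: "((\<lambda>v. cutoff b v / v - v) has_real_derivative D - 1) (at u)"
    by (intro DERIV_diff dQ DERIV_ident)
  have dL: "((\<lambda>v. - cutoff b v / v - v) has_real_derivative - D - 1) (at u)"
    using DERIV_diff[OF DERIV_minus[OF dQ] DERIV_ident] by simp
  have deriv: "(zero_output_prob b has_real_derivative
      std_normal_density U * (D - 1) - std_normal_density (- g / u - u) * (- D - 1)) (at u)"
    unfolding zero_output_prob_def[abs_def] U_def g_def
    by (rule DERIV_diff[OF DERIV_chain2[OF Phi_deriv dU] DERIV_chain2[OF Phi_deriv dL]])
  have "std_normal_density (- g / u - u) = std_normal_density U * exp (- 2 * g)"
    using std_normal_density_reflect_shift[of "g / u" u] u unfolding U_def by simp
  also have "exp (- 2 * g) = inverse (exp g * exp g)"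
    by (simp only: exp_add[symmetric] exp_minus[symmetric]) simp
  also have "\<dots> = 1 / X\<^sup>2"
    using gX by (simp add: power2_eq_square divide_inverse)
  finally have phiL: "std_normal_density (- g / u - u) = std_normal_density U / X\<^sup>2"
    by simp
  have "D * (X\<^sup>2 + 1) - (X\<^sup>2 - 1) = (r * (X\<^sup>2 + 1) - R * (X\<^sup>2 - 1)) / R - g / u\<^sup>2 * (X\<^sup>2 + 1)"
    unfolding D_def using R u by (simp add: field_simps power2_eq_square)
  also have "\<dots> = - 2 * X / R - g / u\<^sup>2 * (X\<^sup>2 + 1)"
    unfolding X_def root_identity[OF RR] ..
  also have "\<dots> < 0"
  proof -
    have "- 2 * X / R < 0"
      using X R by (simp add: divide_neg_pos)
    moreover have "g / u\<^sup>2 * (X\<^sup>2 + 1) > 0"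
      using g u by (simp add: add_nonneg_pos)
    ultimately show ?thesis
      by linarith
  qed
  finally have neg: "D * (X\<^sup>2 + 1) - (X\<^sup>2 - 1) < 0" .
  have "std_normal_density U * (D - 1) - std_normal_density (- g / u - u) * (- D - 1)
      = std_normal_density U * (D * (X\<^sup>2 + 1) - (X\<^sup>2 - 1)) / X\<^sup>2"
    unfolding phiL using X by (simp add: field_simps)
  also have "\<dots> < 0"
    using neg X by (simp add: normal_density_pos mult_pos_neg divide_neg_pos)
  finally show ?thesis
    using deriv by blast
qed

lemma zero_output_prob_strict_antimono_right:
  assumes "b \<ge> 0" "0 < u1" "u1 < u2"
  shows "zero_output_prob b u2 < zero_output_prob b u1"
  using assms by (intro DERIV_neg_imp_decreasing[OF assms(3)] zero_output_prob_neg_deriv) auto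

theorem mainTheorem16:
  fixes tb p0 :: real
  assumes "tb > 0" and "0 < p0" and "p0 < 1"
  shows "(\<forall>sg > 0. strict_mono_on {0..<1} (\<lambda>pt. p_next tb p0 pt sg))
       \<and> (\<forall>pt \<in> {0..<1}. strict_mono_on {0<..} (\<lambda>sg. p_next tb p0 pt sg))"
proof (intro conjI allI impI ballI strict_mono_onI)
  fix sg p1 p2 :: real
  assume "sg > 0" "p1 \<in> {0..<1}" "p2 \<in> {0..<1}" "p1 < p2"
  then have "p1 / (1 - p1) < p2 / (1 - p2)"
    by (simp add: field_simps)
  with \<open>p1 \<in> {0..<1}\<close> \<open>tb > 0\<close> \<open>sg > 0\<close>
  have "zero_output_prob (p1 / (1 - p1)) (tb / sg) < zero_output_prob (p2 / (1 - p2)) (tb / sg)"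
    by (intro zero_output_prob_strict_mono_left) auto
  then show "p_next tb p0 p1 sg < p_next tb p0 p2 sg"
    using \<open>sg > 0\<close> \<open>p1 \<in> {0..<1}\<close> \<open>p2 \<in> {0..<1}\<close> assms by (simp add: p_next_eq)
next
  fix pt s1 s2 :: real
  assume "pt \<in> {0..<1}" "s1 \<in> {0<..}" "s2 \<in> {0<..}" "s1 < s2"
  then have "0 < tb / s2" "tb / s2 < tb / s1"
    using \<open>tb > 0\<close> by (auto intro!: divide_strict_left_mono)
  with \<open>pt \<in> {0..<1}\<close>
  have "zero_output_prob (pt / (1 - pt)) (tb / s1) < zero_output_prob (pt / (1 - pt)) (tb / s2)"
    by (intro zero_output_prob_strict_antimono_right) auto
  then show "p_next tb p0 pt s1 < p_next tb p0 pt s2"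
    using \<open>pt \<in> {0..<1}\<close> \<open>s1 \<in> {0<..}\<close> \<open>s2 \<in> {0<..}\<close> assms by (simp add: p_next_eq)
qed

end
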